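(* Consider the MT-model on $\mathbb{T}_d$, $d\ge2$, and let $N$ be the number of neighbours of the root that are ever informed (the number of spreaders generated by the initial spreader). Then $$\mathbb{P}(N=i)=i!\binom{d+1}{i}\frac{i}{(d+1)^{i+1}},\qquad i\in\{1,\dots,d+1\},$$ and $N\in\{1,\dots,d+1\}$ almost surely.
   Context: Let $d\ge 2$ and let $\mathbb{T}_d$ be the infinite tree in which every vertex has degree $d+1$, with root $\mathbf 0$. The MT-model on $\mathbb{T}_d$ is the continuous-time Markov process $(\eta_t)_{t\ge0}$ on $\{-1,0,1\}^{\mathbb{T}_d}$ ($-1$ = ignorant, $0$ = spreader, $1$ = stifler) in which a vertex in state $-1$ jumps to $0$ at rate equal to its number of neighbours in state $0$, and a vertex in state $0$ jumps to $1$ at rate equal to its number of neighbours in states $\{0,1\}$ (equivalently, each spreader contacts each neighbour at rate 1, informing ignorants and becoming a stifler upon contacting a non-ignorant). Initially $\eta_0(\mathbf 0)=0$ and all other vertices are in state $-1$. *)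

theory Defs
  imports "HOL-Probability.Probability"
begin

text \<open>
Graphical (Harris) construction of the MT-model on the tree T_d.
Vertices are finite lists of natural numbers: the root is [], and the
children of a vertex p are the lists c # p with c < d+1 if p is the root,
c < d otherwise (so every vertex has degree d+1).

For every ordered pair (u,w) of vertices there is an independent rate-1
Poisson clock; its successive interarrival times are omega (u,w,0),
omega (u,w,1), ... (i.i.d. Exp(1)). The ring times of this clock are the
times at which u contacts w. A spreader contacting an ignorant informs it;
a spreader contacting a non-ignorant becomes a stifler.
\<close>

type_synonym vertex = "nat list"
type_synonym sample = "vertex \<times> vertex \<times> nat \<Rightarrow> real"

definition nchildren :: "nat \<Rightarrow> vertex \<Rightarrow> nat" where
  "nchildren d v = (if v = [] then d + 1 else d)"

definition nbrs :: "nat \<Rightarrow> vertex \<Rightarrow> vertex set" where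
  "nbrs d v = {c # v | c. c < nchildren d v} \<union> (if v = [] then {} else {tl v})"

definition contacts :: "sample \<Rightarrow> vertex \<Rightarrow> vertex \<Rightarrow> real set" where
  "contacts \<omega> u w = {(\<Sum>j\<le>k. \<omega> (u, w, j)) | k. True}"

definition firstc :: "sample \<Rightarrow> vertex \<Rightarrow> vertex \<Rightarrow> ereal \<Rightarrow> ereal" where
  "firstc \<omega> u w s = Inf {ereal t | t. t \<in> contacts \<omega> u w \<and> s < ereal t}"

text \<open>Stifling time of v, given its informing time tv: the first time after tv
  at which v contacts a neighbour that is non-ignorant at that moment (its parent,
  or a child which v has already contacted, hence informed, after tv).\<close>
definition stifle :: "nat \<Rightarrow> sample \<Rightarrow> vertex \<Rightarrow> ereal \<Rightarrow> ereal" where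
  "stifle d \<omega> v tv = Inf {ereal t | t. tv < ereal t \<and>
      (\<exists>w \<in> nbrs d v. t \<in> contacts \<omega> v w \<and>
          ((v \<noteq> [] \<and> w = tl v) \<or> firstc \<omega> v w tv < ereal t))}"

text \<open>(informing time, stifling time) of each vertex; infinity means never.\<close>
fun times :: "nat \<Rightarrow> sample \<Rightarrow> vertex \<Rightarrow> ereal \<times> ereal" where
  "times d \<omega> [] = (0, stifle d \<omega> [] 0)"
| "times d \<omega> (c # p) =
     (let (tp, sp) = times d \<omega> p;
          f = firstc \<omega> p (c # p) tp;
          tv = (if f < sp then f else \<infinity>)
      in (tv, stifle d \<omega> (c # p) tv))"

text \<open>State of vertex v at time t: -1 ignorant, 0 spreader, 1 stifler.\<close>
definition eta :: "nat \<Rightarrow> sample \<Rightarrow> real \<Rightarrow> vertex \<Rightarrow> int" where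
  "eta d \<omega> t v = (if ereal t < fst (times d \<omega> v) then -1
                   else if ereal t < snd (times d \<omega> v) then 0 else 1)"

definition Ninf :: "nat \<Rightarrow> sample \<Rightarrow> nat" where
  "Ninf d \<omega> = card {w \<in> nbrs d []. \<exists>t\<ge>0. eta d \<omega> t w \<noteq> -1}"

definition MT_space :: "sample measure" where
  "MT_space = PiM UNIV (\<lambda>_. density lborel (exponential_density 1))"

end

theory Submission
  imports Defs
begin

text \<open>The root contacts each of its n = d + 1 children along an independent rate-1 clock. A
  child is informed at the first ring of its clock unless the root is already a stifler, and the
  root becomes a stifler at the first moment one of its clocks rings for the second time. So N
  counts the clocks that ring once before any clock rings twice. For a winner v and a set A \<ni> v
  of size i, the event that v rings twice first and exactly the clocks in A have rung by then has
  probability \<integral> s e^-s (s e^-s)^(i-1) (e^-s)^(n-i) ds = i!/n^(i+1), as the second ring of v is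
  Erlang distributed. Summing over the (n choose i) i pairs (A, v) bounds P(N = i) from below;
  these bounds already sum to 1, so they are equalities and N \<in> {1..n} almost surely.\<close>

lemma Inf_setcompr_eq_INF:
  "Inf {f x | x. P x} = (INF x. if P x then f x else (top :: 'a :: complete_lattice))"
  by (rule antisym) (auto intro!: INF_greatest Inf_greatest intro: INF_lower2 Inf_lower)

lemma card_pointed_subsets:
  assumes "finite S"
  shows "card (SIGMA A:{A. A \<subseteq> S \<and> card A = i}. A) = (card S choose i) * i"
proof -
  have "card (SIGMA A:{A. A \<subseteq> S \<and> card A = i}. A) = (\<Sum>A | A \<subseteq> S \<and> card A = i. card A)"
    using assms by (intro card_SigmaI) (auto intro: finite_subset)
  also have "\<dots> = (card S choose i) * i"
    using assms by (simp add: n_subsets)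
  finally show ?thesis .
qed

lemma sum_fact_choose_div_power:
  assumes "0 < n"
  shows "(\<Sum>i = 1..n. fact i * real (n choose i) * real i / real n ^ (i + 1)) = (1 :: real)"
proof -
  define b where "b i = fact i * real (n choose i) / real n ^ i" for i
  have absorb: "Suc i * (n choose Suc i) = (n - i) * (n choose i)" for i
    by (metis binomial_absorption binomial_absorb_comp)
  have step: "b (Suc i) = b i * real (n - i) / real n" for i
  proof -
    have "fact (Suc i) * real (n choose Suc i) = fact i * real (Suc i * (n choose Suc i))"
      by (simp add: algebra_simps)
    then show ?thesis
      using assms unfolding absorb by (simp add: b_def field_simps)
  qed
  have "fact i * real (n choose i) * real i / real n ^ (i + 1) = b i - b (Suc i)" if "i \<le> n" for i
    using that assms unfolding step by (simp add: b_def of_nat_diff field_simps)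
  then have "(\<Sum>i = 1..n. fact i * real (n choose i) * real i / real n ^ (i + 1)) = (\<Sum>i = 1..n. b i - b (Suc i))"
    by (intro sum.cong) auto
  also have "\<dots> = b 1 - b (Suc n)"
    using assms sum_Suc_diff[of 1 n "\<lambda>i. - b i"] by simp
  also have "\<dots> = 1"
    using assms by (simp add: b_def)
  finally show ?thesis .
qed

lemma (in prob_space) prob_eq_of_lower_bounds:
  assumes "finite I" and events: "\<And>i. i \<in> I \<Longrightarrow> E i \<in> events" and "disjoint_family_on E I"
    and lower: "\<And>i. i \<in> I \<Longrightarrow> p i \<le> prob (E i)" and sum: "(\<Sum>i\<in>I. p i) = 1"
  shows "(\<forall>i\<in>I. prob (E i) = p i) \<and> (AE x in M. x \<in> (\<Union>i\<in>I. E i))"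
proof -
  have union: "prob (\<Union>i\<in>I. E i) = (\<Sum>i\<in>I. prob (E i))"
    using assms by (intro finite_measure_finite_Union) auto
  have eq: "prob (E i) = p i" if "i \<in> I" for i
  proof (rule ccontr)
    assume "prob (E i) \<noteq> p i"
    then have "(\<Sum>i\<in>I. p i) < (\<Sum>i\<in>I. prob (E i))"
      using that lower \<open>finite I\<close> \<open>prob (E i) \<noteq> p i\<close>
      by (intro sum_strict_mono_ex1) (auto simp: order.strict_iff_order intro!: bexI[of _ i])
    then show False
      using sum union prob_le_1[of "\<Union>i\<in>I. E i"] by simp
  qed
  then have "prob (\<Union>i\<in>I. E i) = 1"
    using union sum by simp
  then have "AE x in M. x \<in> (\<Union>i\<in>I. E i)"
    using events by (intro AE_prob_1) auto
  with eq show ?thesis by blast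
qed

abbreviation Exp1 :: "real measure" where
  "Exp1 \<equiv> density lborel (exponential_density 1)"

abbreviation Exp1_pair :: "(real \<times> real) measure" where
  "Exp1_pair \<equiv> Exp1 \<Otimes>\<^sub>M Exp1"

lemma prob_space_Exp1: "prob_space Exp1"
  by (rule prob_space_exponential_density) simp

lemma prob_space_Exp1_pair: "prob_space Exp1_pair"
  by (intro prob_space_pair prob_space_Exp1)

lemma emeasure_Exp1_greaterThan: "emeasure Exp1 {s<..} = ennreal (exp (- max 0 s))"
proof -
  interpret E: prob_space Exp1 by (rule prob_space_Exp1)
  have "distributed Exp1 lborel (\<lambda>x. x) (exponential_density 1)"
    unfolding distributed_def by (auto simp: distr_id2 measurable_cong_sets[OF sets_density refl])
  then have tail: "0 \<le> a \<Longrightarrow> measure Exp1 {a<..} = exp (- a)" for a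
    using E.exponential_distributedD_gt by (simp add: greaterThan_def)
  show ?thesis
  proof (cases "0 \<le> s")
    case False
    have "measure Exp1 {0<..} \<le> measure Exp1 {s<..}"
      using False by (intro E.finite_measure_mono) auto
    then show ?thesis
      using False tail[of 0] E.prob_le_1[of "{s<..}"] by (simp add: E.emeasure_eq_measure)
  qed (simp add: E.emeasure_eq_measure tail)
qed

lemma emeasure_Exp1_pair_fst_greater:
  "emeasure Exp1_pair {p. s < fst p} = ennreal (exp (- max 0 s))"
proof -
  interpret E: prob_space Exp1 by (rule prob_space_Exp1)
  have "{p. s < fst p} = {s<..} \<times> space Exp1" by auto
  then show ?thesis
    using E.emeasure_space_1 by (simp add: E.emeasure_pair_measure_Times emeasure_Exp1_greaterThan)
qed

lemma emeasure_Exp1_pair_straddle: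
  "emeasure Exp1_pair {p. fst p < s \<and> s < fst p + snd p} = ennreal (max 0 s * exp (- s))"
proof -
  interpret E: prob_space Exp1 by (rule prob_space_Exp1)
  have "{p. fst p < s \<and> s < fst p + snd p} = {p \<in> space Exp1_pair. fst p < s \<and> s < fst p + snd p}"
    by (auto simp: space_pair_measure)
  also have "\<dots> \<in> sets Exp1_pair" by measurable
  finally have "emeasure Exp1_pair {p. fst p < s \<and> s < fst p + snd p} =
      (\<integral>\<^sup>+x. emeasure Exp1 (Pair x -` {p. fst p < s \<and> s < fst p + snd p}) \<partial>Exp1)"
    by (rule E.emeasure_pair_measure_alt)
  also have "\<dots> = (\<integral>\<^sup>+x. ennreal (exp (x - s)) * indicator {..<s} x \<partial>Exp1)"
  proof (intro nn_integral_cong)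
    fix x
    have "Pair x -` {p. fst p < s \<and> s < fst p + snd p} = (if x < s then {s - x<..} else {})"
      by auto
    then show "emeasure Exp1 (Pair x -` {p. fst p < s \<and> s < fst p + snd p}) =
        ennreal (exp (x - s)) * indicator {..<s} x"
      by (simp add: emeasure_Exp1_greaterThan)
  qed
  also have "\<dots> = (\<integral>\<^sup>+x. ennreal (exp (- s)) * indicator {0..<s} x \<partial>lborel)"
    by (subst nn_integral_density)
       (auto intro!: nn_integral_cong simp: exponential_density_def ennreal_mult'[symmetric]
          exp_add[symmetric] split: split_indicator)
  also have "\<dots> = ennreal (max 0 s * exp (- s))"
    by (cases "0 \<le> s") (auto simp: nn_integral_cmult_indicator ennreal_mult'[symmetric] mult.commute)
  finally show ?thesis .
qed

lemma distributed_Exp1_pair_sum: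
  "distributed Exp1_pair lborel (\<lambda>p. fst p + snd p) (erlang_density 1 1)"
proof -
  interpret E: prob_space Exp1 by (rule prob_space_Exp1)
  interpret P: pair_prob_space Exp1 Exp1 ..
  have fst: "distr Exp1_pair lborel fst = Exp1"
    using E.distr_pair_fst[of Exp1] by (subst distr_cong[of _ _ _ Exp1 fst fst]) auto
  have snd: "distr Exp1_pair lborel snd = Exp1"
  proof -
    have "distr Exp1_pair lborel snd = distr (distr Exp1_pair Exp1_pair (\<lambda>(x,y). (y,x))) lborel fst"
      by (subst distr_distr) (auto intro!: distr_cong)
    then show ?thesis using fst by (simp add: P.distr_pair_swap[symmetric])
  qed
  have "distr Exp1_pair borel fst = Exp1" "distr Exp1_pair borel snd = Exp1"
    using fst snd by (auto cong: distr_cong)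
  moreover have "distr Exp1_pair (borel \<Otimes>\<^sub>M borel) (\<lambda>x. x) = Exp1_pair"
    by (rule distr_id2) (simp cong: sets_pair_measure_cong)
  ultimately have "P.indep_var borel fst borel snd"
    unfolding P.indep_var_distribution_eq by auto
  then show ?thesis
    using P.sum_indep_erlang[of fst snd 1 0 0] fst snd by (simp add: distributed_def)
qed

text \<open>Clock c rings first at fst (z c) and a second time at fst (z c) + snd (z c).\<close>
definition race_event :: "nat \<Rightarrow> nat set \<Rightarrow> nat \<Rightarrow> (nat \<Rightarrow> real \<times> real) set" where
  "race_event n A v = {z \<in> space (PiM {..<n} (\<lambda>_. Exp1_pair)). \<forall>w \<in> {..<n} - {v}.
     (w \<in> A \<longrightarrow> fst (z w) < fst (z v) + snd (z v) \<and> fst (z v) + snd (z v) < fst (z w) + snd (z w)) \<and>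
     (w \<notin> A \<longrightarrow> fst (z v) + snd (z v) < fst (z w))}"

lemma race_event_sets: "v < n \<Longrightarrow> race_event n A v \<in> sets (PiM {..<n} (\<lambda>_. Exp1_pair))"
  unfolding race_event_def by measurable

text \<open>The conditional probability of race_event n A v, for card A = i, given that clock v rings
  twice at time s: each of the i - 1 other clocks in A rings before s but not again until after s,
  and none of the other n - i clocks rings before s.\<close>
definition race_weight :: "nat \<Rightarrow> nat \<Rightarrow> real \<Rightarrow> ennreal" where
  "race_weight n i s = ennreal (max 0 s * exp (- s)) ^ (i - 1) * ennreal (exp (- max 0 s)) ^ (n - i)"

lemma measurable_race_weight[measurable]: "race_weight n i \<in> borel_measurable borel"
  unfolding race_weight_def by measurable

lemma nn_integral_erlang_race_weight:
  assumes i: "1 \<le> i" "i \<le> n"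
  shows "(\<integral>\<^sup>+s. race_weight n i s \<partial>density lborel (erlang_density 1 1)) = ennreal (fact i / real n ^ (i + 1))"
proof -
  have n: "0 < n" using i by simp
  have integrand: "ennreal (erlang_density 1 1 s) * race_weight n i s =
      ennreal (1 / real n) * ennreal (erlang_density 0 (real n) s * s ^ i)" for s
  proof (cases "0 \<le> s")
    case True
    have "s * exp (- s) * ((s * exp (- s)) ^ (i - 1) * exp (- s) ^ (n - i)) = s ^ i * exp (- s) ^ n"
    proof -
      have "s * exp (- s) * (s * exp (- s)) ^ (i - 1) = s ^ i * exp (- s) ^ i"
        using i by (cases i) (simp_all add: power_mult_distrib)
      moreover have "exp (- s) ^ i * exp (- s) ^ (n - i) = exp (- s) ^ n"
        using i by (simp add: power_add[symmetric])
      ultimately show ?thesis by (metis mult.assoc)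
    qed
    also have "\<dots> = 1 / real n * (erlang_density 0 (real n) s * s ^ i)"
      using True n by (simp add: erlang_density_def exp_of_nat_mult[symmetric])
    finally show ?thesis
      using True
      by (simp add: race_weight_def erlang_density_def ennreal_power ennreal_mult''[symmetric])
  qed (simp add: erlang_density_def race_weight_def)
  have "(\<integral>\<^sup>+s. race_weight n i s \<partial>density lborel (erlang_density 1 1)) =
      (\<integral>\<^sup>+s. ennreal (erlang_density 1 1 s) * race_weight n i s \<partial>lborel)"
    by (rule nn_integral_density) auto
  also have "\<dots> = (\<integral>\<^sup>+s. ennreal (1 / real n) * ennreal (erlang_density 0 (real n) s * s ^ i) \<partial>lborel)"
    by (simp only: integrand)
  also have "\<dots> = ennreal (1 / real n) * ennreal (fact i / real n ^ i)"
    using n by (simp add: nn_integral_cmult nn_integral_erlang_ith_moment)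
  also have "\<dots> = ennreal (fact i / real n ^ (i + 1))"
    by (simp add: ennreal_mult''[symmetric])
  finally show ?thesis .
qed

lemma emeasure_race_event:
  assumes A: "A \<subseteq> {..<n}" "v \<in> A" "card A = i"
  shows "emeasure (PiM {..<n} (\<lambda>_. Exp1_pair)) (race_event n A v) = ennreal (fact i / real n ^ (i + 1))"
proof -
  interpret Q: prob_space Exp1_pair by (rule prob_space_Exp1_pair)
  interpret PS: product_sigma_finite "\<lambda>_. Exp1_pair"
    by (simp add: product_sigma_finite_def Q.sigma_finite_measure_axioms)
  have v: "v < n" and finA: "finite A" using A by (auto intro: finite_subset)
  have i: "1 \<le> i" "i \<le> n"
    using A finA card_mono[OF _ A(1)] by (auto simp: Suc_le_eq card_gt_0_iff)
  define W where "W = {..<n} - {v}"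
  have W: "{..<n} = insert v W" "v \<notin> W" "finite W" using v by (auto simp: W_def)
  define B where "B s w = (if w \<in> A then {p :: real \<times> real. fst p < s \<and> s < fst p + snd p} else {p. s < fst p})" for s w
  have B_sets: "B s w \<in> sets Exp1_pair" for s w
  proof -
    have "B s w = {p \<in> space Exp1_pair. if w \<in> A then fst p < s \<and> s < fst p + snd p else s < fst p}"
      by (auto simp: B_def space_pair_measure)
    also have "\<dots> \<in> sets Exp1_pair" by measurable
    finally show ?thesis .
  qed
  have slice: "(\<integral>\<^sup>+z. indicator (race_event n A v) (z(v := p)) \<partial>PiM W (\<lambda>_. Exp1_pair))
      = race_weight n i (fst p + snd p)" for p
  proof -
    let ?s = "fst p + snd p"
    have "(\<integral>\<^sup>+z. indicator (race_event n A v) (z(v := p)) \<partial>PiM W (\<lambda>_. Exp1_pair))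
        = (\<integral>\<^sup>+z. indicator (Pi\<^sub>E W (B ?s)) z \<partial>PiM W (\<lambda>_. Exp1_pair))"
      using W by (intro nn_integral_cong)
        (auto simp: race_event_def B_def W_def space_PiM PiE_iff space_pair_measure extensional_def
          split: split_indicator)
    also have "\<dots> = (\<Prod>w\<in>W. emeasure Exp1_pair (B ?s w))"
      using W B_sets by (simp add: sets_PiM_I_finite PS.emeasure_PiM)
    also have "\<dots> = race_weight n i ?s"
    proof -
      have "W \<inter> A = A - {v}" "W \<inter> - A = {..<n} - A" using A by (auto simp: W_def)
      then have "card (W \<inter> A) = i - 1" "card (W \<inter> - A) = n - i"
        using A finA by (simp_all add: card_Diff_subset)
      then show ?thesis
        unfolding B_def if_distrib[of "emeasure Exp1_pair"] prod.If_cases[OF W(3)]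
        by (simp add: race_weight_def emeasure_Exp1_pair_straddle emeasure_Exp1_pair_fst_greater)
    qed
    finally show ?thesis .
  qed
  have "emeasure (PiM {..<n} (\<lambda>_. Exp1_pair)) (race_event n A v)
      = (\<integral>\<^sup>+z. indicator (race_event n A v) z \<partial>PiM {..<n} (\<lambda>_. Exp1_pair))"
    using race_event_sets[OF v] by simp
  also have "\<dots> = (\<integral>\<^sup>+p. \<integral>\<^sup>+z. indicator (race_event n A v) (z(v := p)) \<partial>PiM W (\<lambda>_. Exp1_pair) \<partial>Exp1_pair)"
    unfolding W(1)
    by (rule PS.product_nn_integral_insert_rev) (use W race_event_sets[OF v] in auto)
  also have "\<dots> = (\<integral>\<^sup>+p. race_weight n i (fst p + snd p) \<partial>Exp1_pair)"
    by (simp only: slice)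
  also have "\<dots> = (\<integral>\<^sup>+s. race_weight n i s \<partial>density lborel (erlang_density 1 1))"
    using distributed_Exp1_pair_sum
    by (simp add: distributed_def nn_integral_distr[of "\<lambda>p. fst p + snd p" Exp1_pair lborel, symmetric])
  also have "\<dots> = ennreal (fact i / real n ^ (i + 1))"
    by (rule nn_integral_erlang_race_weight[OF i])
  finally show ?thesis .
qed

lemma race_event_winner:
  assumes z: "z \<in> race_event n A v" and pos: "\<forall>c<n. 0 < snd (z c)" and c: "c < n" "c \<noteq> v"
  shows "fst (z v) + snd (z v) < fst (z c) + snd (z c)"
  using z pos c unfolding race_event_def by (cases "c \<in> A") force+

lemma race_event_early_clocks:
  assumes z: "z \<in> race_event n A v" and pos: "\<forall>c<n. 0 < snd (z c)" and A: "A \<subseteq> {..<n}" "v \<in> A"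
  shows "A = {c. c < n \<and> fst (z c) < fst (z v) + snd (z v)}"
proof (intro set_eqI iffI)
  fix c assume "c \<in> A"
  then show "c \<in> {c. c < n \<and> fst (z c) < fst (z v) + snd (z v)}"
    using z pos A unfolding race_event_def by (cases "c = v") auto
next
  fix c assume c: "c \<in> {c. c < n \<and> fst (z c) < fst (z v) + snd (z v)}"
  show "c \<in> A"
  proof (rule ccontr)
    assume "c \<notin> A"
    then show False
      using z c A(2) unfolding race_event_def by (cases "c = v") (auto dest!: bspec[of _ _ c])
  qed
qed

lemma race_event_unique:
  assumes "z \<in> race_event n A v" "z \<in> race_event n A' v'" and pos: "\<forall>c<n. 0 < snd (z c)"
    and "A \<subseteq> {..<n}" "v \<in> A" "A' \<subseteq> {..<n}" "v' \<in> A'"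
  shows "A = A' \<and> v = v'"
proof -
  have "v = v'"
    using race_event_winner[OF assms(1) pos, of v'] race_event_winner[OF assms(2) pos, of v] assms
    by force
  then show ?thesis
    using race_event_early_clocks[OF assms(1) pos] race_event_early_clocks[OF assms(2) pos] assms
    by simp
qed

lemma nbrs_root: "nbrs d [] = (\<lambda>c. [c]) ` {..<Suc d}"
  by (auto simp: nbrs_def nchildren_def)

lemma firstc_eq_INF:
  "firstc \<omega> u w s =
    (INF k. if s < ereal (\<Sum>j\<le>k. \<omega> (u, w, j)) then ereal (\<Sum>j\<le>k. \<omega> (u, w, j)) else \<infinity>)"
proof -
  have *: "{ereal t |t. t \<in> contacts \<omega> u w \<and> s < ereal t} =
      {ereal (\<Sum>j\<le>k. \<omega> (u, w, j)) |k. s < ereal (\<Sum>j\<le>k. \<omega> (u, w, j))}"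
    by (auto simp: contacts_def)
  show ?thesis
    unfolding firstc_def by (simp only: * Inf_setcompr_eq_INF top_ereal_def)
qed

lemma stifle_root_eq_INF:
  "stifle d \<omega> [] s =
    (INF ck. if fst ck < Suc d \<and> s < ereal (\<Sum>j\<le>snd ck. \<omega> ([], [fst ck], j)) \<and>
        firstc \<omega> [] [fst ck] s < ereal (\<Sum>j\<le>snd ck. \<omega> ([], [fst ck], j))
      then ereal (\<Sum>j\<le>snd ck. \<omega> ([], [fst ck], j)) else \<infinity>)"
proof -
  have *: "{ereal t |t. s < ereal t \<and> (\<exists>w\<in>nbrs d []. t \<in> contacts \<omega> [] w \<and>
          ([] \<noteq> [] \<and> w = tl [] \<or> firstc \<omega> [] w s < ereal t))} =
      {ereal (\<Sum>j\<le>snd ck. \<omega> ([], [fst ck], j)) |ck. fst ck < Suc d \<and>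
          s < ereal (\<Sum>j\<le>snd ck. \<omega> ([], [fst ck], j)) \<and>
          firstc \<omega> [] [fst ck] s < ereal (\<Sum>j\<le>snd ck. \<omega> ([], [fst ck], j))}"
    by (auto simp: contacts_def nbrs_root)
  show ?thesis
    unfolding stifle_def by (simp only: * Inf_setcompr_eq_INF top_ereal_def)
qed

lemma prob_space_MT_space: "prob_space MT_space"
  unfolding MT_space_def by (intro prob_space_PiM prob_space_Exp1)

lemma measurable_MT_coordinate: "(\<lambda>\<omega>. \<omega> x) \<in> measurable MT_space Exp1"
  unfolding MT_space_def by (rule measurable_component_singleton) simp

lemma borel_measurable_MT_coordinate[measurable]: "(\<lambda>\<omega>. \<omega> x) \<in> borel_measurable MT_space"
  using measurable_MT_coordinate by (simp add: measurable_cong_sets[OF refl sets_density])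

lemma borel_measurable_firstc_root[measurable]:
  "(\<lambda>\<omega>. firstc \<omega> [] [c] 0) \<in> borel_measurable MT_space"
  unfolding firstc_eq_INF by measurable

lemma borel_measurable_stifle_root[measurable]:
  "(\<lambda>\<omega>. stifle d \<omega> [] 0) \<in> borel_measurable MT_space"
  unfolding stifle_root_eq_INF by (rule borel_measurable_INF) measurable

lemma firstc_eq_first_interarrival:
  assumes pos: "\<forall>j. 0 < \<omega> (u, w, j)"
  shows "firstc \<omega> u w 0 = ereal (\<omega> (u, w, 0))"
proof -
  have "\<omega> (u, w, 0) \<le> (\<Sum>j\<le>k. \<omega> (u, w, j))" "0 < (\<Sum>j\<le>k. \<omega> (u, w, j))" for k
    using sum_mono2[of "{..k}" "{..0}" "\<lambda>j. \<omega> (u, w, j)"] pos by (auto intro: less_imp_le sum_pos)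
  then show ?thesis
    using pos unfolding firstc_eq_INF by (intro antisym INF_greatest INF_lower2[of 0]) auto
qed

text \<open>With positive interarrival times the root becomes a stifler at the first second ring
  among its clocks: a first ring informs the child, a later ring finds it non-ignorant.\<close>
lemma stifle_root_eq_Min:
  assumes pos: "\<forall>x. 0 < \<omega> x"
  shows "stifle d \<omega> [] 0 = ereal (MIN c\<in>{..<Suc d}. \<omega> ([], [c], 0) + \<omega> ([], [c], 1))"
    (is "_ = ereal ?m")
proof -
  let ?S = "\<lambda>c k. \<Sum>j\<le>k. \<omega> ([], [c], j)"
  have first: "firstc \<omega> [] [c] 0 = ereal (\<omega> ([], [c], 0))" for c
    using pos by (simp add: firstc_eq_first_interarrival)
  have "?m \<in> (\<lambda>c. \<omega> ([], [c], 0) + \<omega> ([], [c], 1)) ` {..<Suc d}"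
    by (rule Min_in) auto
  then obtain c0 where c0: "c0 < Suc d" "?m = \<omega> ([], [c0], 0) + \<omega> ([], [c0], 1)"
    by blast
  have "?m \<le> ?S c k" if "c < Suc d" "\<omega> ([], [c], 0) < ?S c k" for c k
  proof -
    have "1 \<le> k" using that(2) by (cases k) auto
    then have "?S c 1 \<le> ?S c k"
      using pos by (intro sum_mono2) (auto intro: less_imp_le)
    moreover have "?m \<le> ?S c 1"
      using that(1) by (auto simp: numeral_2_eq_2 intro: Min_le)
    ultimately show ?thesis by simp
  qed
  moreover have "0 < ?S c0 1" "\<omega> ([], [c0], 0) < ?S c0 1"
    using pos by (auto intro: add_pos_pos)
  ultimately show ?thesis
    unfolding stifle_root_eq_INF first
    using c0 by (intro antisym INF_greatest INF_lower2[of "(c0, 1)"]) auto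
qed

lemma child_of_root_informed_iff:
  "(\<exists>t\<ge>0. eta d \<omega> t [c] \<noteq> -1) \<longleftrightarrow> firstc \<omega> [] [c] 0 < stifle d \<omega> [] 0"
proof -
  have informed: "fst (times d \<omega> [c]) =
      (if firstc \<omega> [] [c] 0 < stifle d \<omega> [] 0 then firstc \<omega> [] [c] 0 else \<infinity>)"
    by (simp add: Let_def)
  have "0 \<le> firstc \<omega> [] [c] 0"
    unfolding firstc_def by (rule Inf_greatest) auto
  then show ?thesis
    unfolding eta_def informed
    by (cases "firstc \<omega> [] [c] 0")
       (auto intro: exI[of _ "real_of_ereal (firstc \<omega> [] [c] 0)"] split: if_splits)
qed

lemma Ninf_eq_card_informed:
  "Ninf d \<omega> = card {c. c < Suc d \<and> firstc \<omega> [] [c] 0 < stifle d \<omega> [] 0}"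
proof -
  have "{w \<in> nbrs d []. \<exists>t\<ge>0. eta d \<omega> t w \<noteq> -1} =
      (\<lambda>c. [c]) ` {c. c < Suc d \<and> firstc \<omega> [] [c] 0 < stifle d \<omega> [] 0}"
    by (auto simp: nbrs_root child_of_root_informed_iff[symmetric])
  then show ?thesis unfolding Ninf_def by (simp add: card_image inj_on_def)
qed

lemma sets_Ninf_eq: "{\<omega> \<in> space MT_space. Ninf d \<omega> = i} \<in> sets MT_space"
proof -
  have "Ninf d \<omega> = (\<Sum>c<Suc d. of_bool (firstc \<omega> [] [c] 0 < stifle d \<omega> [] 0))" for \<omega>
    unfolding Ninf_eq_card_informed sum_of_bool_eq[OF finite_lessThan]
    by (simp add: Collect_conj_eq lessThan_def)
  then show ?thesis by simp measurable
qed

lemma Ninf_eq_card_early: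
  assumes "\<forall>x. 0 < \<omega> x"
  shows "Ninf d \<omega> = card {c. c < Suc d \<and>
    \<omega> ([], [c], 0) < (MIN c'\<in>{..<Suc d}. \<omega> ([], [c'], 0) + \<omega> ([], [c'], 1))}"
  using assms by (simp add: Ninf_eq_card_informed stifle_root_eq_Min firstc_eq_first_interarrival)

definition root_clocks :: "nat \<Rightarrow> sample \<Rightarrow> nat \<Rightarrow> real \<times> real" where
  "root_clocks n \<omega> = (\<lambda>c\<in>{..<n}. (\<omega> ([], [c], 0), \<omega> ([], [c], 1)))"

lemma Ninf_on_race_event:
  assumes pos: "\<forall>x. 0 < \<omega> x" and race: "root_clocks (Suc d) \<omega> \<in> race_event (Suc d) A v"
    and A: "A \<subseteq> {..<Suc d}" "v \<in> A"
  shows "Ninf d \<omega> = card A"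
proof -
  let ?z = "root_clocks (Suc d) \<omega>"
  let ?Sv = "\<omega> ([], [v], 0) + \<omega> ([], [v], 1)"
  have z: "?z c = (\<omega> ([], [c], 0), \<omega> ([], [c], 1))" if "c < Suc d" for c
    using that by (simp add: root_clocks_def)
  have zpos: "\<forall>c<Suc d. 0 < snd (?z c)"
    using pos by (simp add: z)
  have "?Sv \<le> \<omega> ([], [c], 0) + \<omega> ([], [c], 1)" if "c < Suc d" for c
    using race_event_winner[OF race zpos that] A that by (cases "c = v") (auto simp: z)
  then have "(MIN c\<in>{..<Suc d}. \<omega> ([], [c], 0) + \<omega> ([], [c], 1)) = ?Sv"
    using A by (intro Min_eqI) auto
  moreover have "A = {c. c < Suc d \<and> \<omega> ([], [c], 0) < ?Sv}"
    using race_event_early_clocks[OF race zpos A] A by (auto simp: z)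
  ultimately show ?thesis
    using pos by (simp add: Ninf_eq_card_early)
qed

lemma AE_MT_space_positive: "AE \<omega> in MT_space. \<forall>x. 0 < \<omega> x"
proof -
  have "AE t in Exp1. 0 < t"
  proof (subst AE_density)
    show "AE t in lborel. 0 < ennreal (exponential_density 1 t) \<longrightarrow> 0 < t"
      using AE_lborel_singleton[of 0] by eventually_elim (auto simp: exponential_density_def)
  qed simp
  then show ?thesis
    unfolding AE_all_countable MT_space_def by (auto intro: AE_PiM_component prob_space_Exp1)
qed

lemma distr_MT_coordinate: "distr MT_space Exp1 (\<lambda>\<omega>. \<omega> x) = Exp1"
  unfolding MT_space_def by (rule distr_PiM_component) (auto intro: prob_space_Exp1)

lemma indep_vars_MT_coordinates:
  assumes "inj_on f I" "I \<noteq> {}"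
  shows "prob_space.indep_vars MT_space (\<lambda>_. Exp1) (\<lambda>i \<omega>. \<omega> (f i)) I"
proof -
  interpret P: prob_space MT_space by (rule prob_space_MT_space)
  have "distr MT_space (Pi\<^sub>M I (\<lambda>_. Exp1)) (\<lambda>\<omega>. \<lambda>i\<in>I. \<omega> (f i)) = Pi\<^sub>M I (\<lambda>_. Exp1)"
    unfolding MT_space_def
    by (rule distr_PiM_reindex[where M="\<lambda>_. Exp1"]) (use assms prob_space_Exp1 in auto)
  then show ?thesis
    using assms measurable_MT_coordinate
    by (subst P.indep_vars_iff_distr_eq_PiM') (auto simp: distr_MT_coordinate)
qed

lemma distr_MT_coordinate_pair:
  assumes "x \<noteq> y"
  shows "distr MT_space Exp1_pair (\<lambda>\<omega>. (\<omega> x, \<omega> y)) = Exp1_pair"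
proof -
  interpret P: prob_space MT_space by (rule prob_space_MT_space)
  have "P.indep_vars (\<lambda>_. Exp1) (\<lambda>b \<omega>. \<omega> (if b then x else y)) UNIV"
    using assms by (intro indep_vars_MT_coordinates) (auto simp: inj_on_def)
  then have "P.indep_var Exp1 (\<lambda>\<omega>. \<omega> x) Exp1 (\<lambda>\<omega>. \<omega> y)"
    unfolding P.indep_var_def
    by (rule iffD1[OF P.indep_vars_cong, rotated 3]) (auto split: bool.split)
  then show ?thesis
    unfolding P.indep_var_distribution_eq by (simp add: distr_MT_coordinate)
qed

lemma measurable_root_clocks[measurable]:
  "root_clocks n \<in> measurable MT_space (PiM {..<n} (\<lambda>_. Exp1_pair))"
  unfolding root_clocks_def by measurable

lemma distr_root_clocks:
  assumes "0 < n"
  shows "distr MT_space (PiM {..<n} (\<lambda>_. Exp1_pair)) (root_clocks n) = PiM {..<n} (\<lambda>_. Exp1_pair)"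
proof -
  interpret P: prob_space MT_space by (rule prob_space_MT_space)
  define f :: "nat \<times> bool \<Rightarrow> vertex \<times> vertex \<times> nat" where
    "f = (\<lambda>(c, b). ([], [c], if b then 0 else 1))"
  have "P.indep_vars (\<lambda>_. Exp1) (\<lambda>i \<omega>. \<omega> (f i)) ({..<n} \<times> UNIV)"
    using assms by (intro indep_vars_MT_coordinates) (auto simp: inj_on_def f_def split: if_splits)
  then have "P.indep_vars (\<lambda>c. PiM ({c} \<times> UNIV) (\<lambda>_. Exp1))
      (\<lambda>c \<omega>. restrict (\<lambda>i. \<omega> (f i)) ({c} \<times> UNIV)) {..<n}"
    by (rule P.indep_vars_restrict) (auto simp: disjoint_family_on_def)
  then have "P.indep_vars (\<lambda>_. Exp1_pair)
      (\<lambda>c \<omega>. (\<lambda>z. (z (c, True), z (c, False))) (restrict (\<lambda>i. \<omega> (f i)) ({c} \<times> UNIV))) {..<n}"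
    by (rule P.indep_vars_compose2) measurable
  then have "P.indep_vars (\<lambda>_. Exp1_pair) (\<lambda>c \<omega>. (\<omega> ([], [c], 0), \<omega> ([], [c], 1))) {..<n}"
    by (rule iffD1[OF P.indep_vars_cong, rotated 3]) (auto simp: f_def)
  then have "distr MT_space (PiM {..<n} (\<lambda>_. Exp1_pair)) (root_clocks n)
      = PiM {..<n} (\<lambda>c. distr MT_space Exp1_pair (\<lambda>\<omega>. (\<omega> ([], [c], 0), \<omega> ([], [c], 1))))"
    unfolding root_clocks_def using assms by (subst (asm) P.indep_vars_iff_distr_eq_PiM') auto
  also have "\<dots> = PiM {..<n} (\<lambda>_. Exp1_pair)"
    by (rule PiM_cong) (auto simp: distr_MT_coordinate_pair)
  finally show ?thesis .
qed

definition positive_samples :: "sample set" where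
  "positive_samples = {\<omega> \<in> space MT_space. \<forall>x. 0 < \<omega> x}"

lemma sets_race_event_root_clocks:
  assumes "v < n"
  shows "root_clocks n -` race_event n A v \<inter> positive_samples \<in> sets MT_space"
proof -
  have "root_clocks n -` race_event n A v \<inter> positive_samples =
      (root_clocks n -` race_event n A v \<inter> space MT_space) \<inter> positive_samples"
    by (auto simp: positive_samples_def)
  also have "\<dots> \<in> sets MT_space"
    unfolding positive_samples_def
    by (intro sets.Int measurable_sets[OF measurable_root_clocks race_event_sets[OF assms]]) measurable
  finally show ?thesis .
qed

lemma measure_race_event_root_clocks:
  assumes "A \<subseteq> {..<n}" "v \<in> A" "card A = i"
  shows "measure MT_space (root_clocks n -` race_event n A v \<inter> positive_samples) = fact i / real n ^ (i + 1)"
proof -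
  interpret P: prob_space MT_space by (rule prob_space_MT_space)
  have n: "0 < n" "v < n" using assms by auto
  have "emeasure MT_space (root_clocks n -` race_event n A v \<inter> positive_samples)
      = emeasure MT_space (root_clocks n -` race_event n A v \<inter> space MT_space)"
    using AE_MT_space_positive sets_race_event_root_clocks[OF n(2)]
      measurable_sets[OF measurable_root_clocks race_event_sets[OF n(2)]]
    by (intro emeasure_eq_AE) (auto simp: positive_samples_def)
  also have "\<dots> = emeasure (distr MT_space (PiM {..<n} (\<lambda>_. Exp1_pair)) (root_clocks n)) (race_event n A v)"
    by (rule emeasure_distr[symmetric]) (auto intro: race_event_sets n)
  also have "\<dots> = ennreal (fact i / real n ^ (i + 1))"
    unfolding distr_root_clocks[OF n(1)] by (rule emeasure_race_event[OF assms])
  finally show ?thesis by (simp add: P.emeasure_eq_measure)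
qed

lemma race_event_root_clocks_unique:
  assumes "\<omega> \<in> positive_samples"
    and "root_clocks n \<omega> \<in> race_event n A v" "root_clocks n \<omega> \<in> race_event n A' v'"
    and "A \<subseteq> {..<n}" "v \<in> A" "A' \<subseteq> {..<n}" "v' \<in> A'"
  shows "A = A' \<and> v = v'"
proof -
  have "\<forall>c<n. 0 < snd (root_clocks n \<omega> c)"
    using assms(1) by (simp add: root_clocks_def positive_samples_def)
  then show ?thesis
    using race_event_unique assms(2-) by blast
qed

lemma prob_Ninf_lower_bound:
  assumes i: "i \<in> {1..Suc d}"
  shows "fact i * real (Suc d choose i) * real i / real (Suc d) ^ (i + 1)
    \<le> measure MT_space {\<omega> \<in> space MT_space. Ninf d \<omega> = i}"
proof -
  interpret P: prob_space MT_space by (rule prob_space_MT_space)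
  define n where "n = Suc d"
  define Pairs where "Pairs = (SIGMA A:{A. A \<subseteq> {..<n} \<and> card A = i}. A)"
  define F where "F p = root_clocks n -` race_event n (fst p) (snd p) \<inter> positive_samples" for p
  have Pairs: "fst p \<subseteq> {..<n}" "snd p \<in> fst p" "card (fst p) = i" if "p \<in> Pairs" for p
    using that by (auto simp: Pairs_def)
  have "finite Pairs"
    unfolding Pairs_def by (rule finite_SigmaI) (auto intro: finite_subset)
  moreover have "F p \<in> P.events" if "p \<in> Pairs" for p
    using Pairs[OF that] unfolding F_def by (intro sets_race_event_root_clocks) auto
  moreover have "disjoint_family_on F Pairs"
    unfolding disjoint_family_on_def
  proof (intro ballI impI)
    fix p q assume pq: "p \<in> Pairs" "q \<in> Pairs" "p \<noteq> q"
    have "\<omega> \<notin> F q" if "\<omega> \<in> F p" for \<omega>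
      using race_event_root_clocks_unique[of \<omega> n "fst p" "snd p" "fst q" "snd q"] that
        Pairs[OF pq(1)] Pairs[OF pq(2)] pq(3)
      by (auto simp: F_def prod_eq_iff)
    then show "F p \<inter> F q = {}" by blast
  qed
  ultimately have "measure MT_space (\<Union>p\<in>Pairs. F p) = (\<Sum>p\<in>Pairs. measure MT_space (F p))"
    by (intro P.finite_measure_finite_Union) auto
  also have "\<dots> = (\<Sum>p\<in>Pairs. fact i / real n ^ (i + 1))"
    using Pairs unfolding F_def by (intro sum.cong refl measure_race_event_root_clocks) auto
  also have "\<dots> = fact i * real (n choose i) * real i / real n ^ (i + 1)"
    by (simp add: Pairs_def card_pointed_subsets)
  finally have measure_union:
    "measure MT_space (\<Union>p\<in>Pairs. F p) = fact i * real (n choose i) * real i / real n ^ (i + 1)" .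
  have "(\<Union>p\<in>Pairs. F p) \<subseteq> {\<omega> \<in> space MT_space. Ninf d \<omega> = i}"
  proof
    fix \<omega> assume "\<omega> \<in> (\<Union>p\<in>Pairs. F p)"
    then obtain p where p: "p \<in> Pairs" "\<omega> \<in> F p" by blast
    then have "Ninf d \<omega> = card (fst p)"
      using Pairs[OF p(1)] by (intro Ninf_on_race_event) (auto simp: F_def positive_samples_def n_def)
    then show "\<omega> \<in> {\<omega> \<in> space MT_space. Ninf d \<omega> = i}"
      using p Pairs[OF p(1)] by (simp add: F_def positive_samples_def)
  qed
  from P.finite_measure_mono[OF this sets_Ninf_eq] show ?thesis
    unfolding measure_union n_def .
qed

theorem lemma1:
  fixes d :: nat
  assumes "d \<ge> 2"
  shows "(\<forall>i \<in> {1..d+1}.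
            measure MT_space {\<omega> \<in> space MT_space. Ninf d \<omega> = i}
              = fact i * real ((d + 1) choose i) * real i / real (d + 1) ^ (i + 1))
         \<and> (AE \<omega> in MT_space. Ninf d \<omega> \<in> {1..d+1})"
proof -
  interpret P: prob_space MT_space by (rule prob_space_MT_space)
  have probs: "(\<forall>i\<in>{1..Suc d}. measure MT_space {\<omega> \<in> space MT_space. Ninf d \<omega> = i}
          = fact i * real (Suc d choose i) * real i / real (Suc d) ^ (i + 1))
      \<and> (AE \<omega> in MT_space. \<omega> \<in> (\<Union>i\<in>{1..Suc d}. {\<omega> \<in> space MT_space. Ninf d \<omega> = i}))"
    by (intro P.prob_eq_of_lower_bounds prob_Ninf_lower_bound sum_fact_choose_div_power sets_Ninf_eq)
      (auto simp: disjoint_family_on_def)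
  then have "AE \<omega> in MT_space. Ninf d \<omega> \<in> {1..Suc d}"
    by (auto elim: AE_mp)
  with probs show ?thesis by simp
qed

end
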